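(* Let $X$ be a nonempty set, $\sigma(X)$ an algebra on $X$, $z_1\neq z_2$ complex numbers, and $f:\sigma(X)\to\{z_1,z_2\}$ a surjection such that $f(A)+f(B)=f(A\cup B)+f(A\cap B)$ for all $A,B\in\sigma(X)$. Then: (1) for each $A\in\sigma(X)$, $\{f(A),f(X\setminus A)\}=\{z_1,z_2\}$ (in particular $f(\varnothing)\ne f(X)$); (2) if $Y\in f^{-1}(f(\varnothing))$ and $A\in\sigma(X)$ with $A\subseteq Y$, then $A\in f^{-1}(f(\varnothing))$; and if $U\in f^{-1}(f(X))$ and $V\in\sigma(X)$ with $U\subseteq V$, then $V\in f^{-1}(f(X))$; (3) each of $f^{-1}(z_1)$ and $f^{-1}(z_2)$ is closed under finite intersections and finite unions.
   Context: An algebra $\sigma(X)$ on a nonempty set $X$ is a family of subsets of $X$ containing $\varnothing$ and $X$ and closed under finite unions and complements (hence also under finite intersections). *)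

theory Defs
  imports "HOL-Analysis.Analysis"
begin

end

theory Submission
  imports Defs
begin

text \<open>Among two distinct values of a field of characteristic 0, \<open>u + u = v + w\<close> forces
  \<open>v = w = u\<close>. Hence modularity makes each level set of \<open>f\<close> closed under \<open>\<union>\<close> and \<open>\<inter>\<close>, and
  \<open>f(A) + f(X - A) = f(X) + f(\<emptyset>)\<close>. If \<open>f(\<emptyset>) = f(X)\<close>, the latter makes \<open>f\<close> constant,
  contradicting surjectivity; so complements lie in different level sets. Monotonicity follows
  because a set and the complement of a comparable set in the same level set would have
  \<open>X\<close> as join, resp. \<open>\<emptyset>\<close> as meet, in that level set.\<close>

lemma double_eq_add_two_valued:
  fixes z1 z2 u v w :: "'a :: field_char_0"
  assumes "z1 \<noteq> z2" "u \<in> {z1, z2}" "v \<in> {z1, z2}" "w \<in> {z1, z2}" "u + u = v + w"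
  shows "v = u \<and> w = u"
  using assms by (auto simp flip: mult_2)

locale two_valued_modular = algebra X S
  for X :: "'a set" and S :: "'a set set" +
  fixes f :: "'a set \<Rightarrow> 'b :: field_char_0" and z1 z2 :: 'b
  assumes values_distinct: "z1 \<noteq> z2"
    and image_eq: "f ` S = {z1, z2}"
    and modular: "\<And>A B. A \<in> S \<Longrightarrow> B \<in> S \<Longrightarrow> f A + f B = f (A \<union> B) + f (A \<inter> B)"
begin

lemma f_in_values: "A \<in> S \<Longrightarrow> f A \<in> {z1, z2}"
  using image_eq by blast

lemma f_eq_of_double_eq_add:
  assumes "A \<in> S" "B \<in> S" "C \<in> S" "f A + f A = f B + f C"
  shows "f B = f A \<and> f C = f A"
  using double_eq_add_two_valued[OF values_distinct] f_in_values assms by blast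

lemma level_set_Un_Int:
  assumes "A \<in> S" "B \<in> S" "f A = u" "f B = u"
  shows "f (A \<union> B) = u \<and> f (A \<inter> B) = u"
  using f_eq_of_double_eq_add[of A "A \<union> B" "A \<inter> B"] modular[of A B] assms by auto

lemma f_add_f_compl: "A \<in> S \<Longrightarrow> f A + f (X - A) = f X + f {}"
proof -
  assume "A \<in> S"
  then have "A \<union> (X - A) = X" "A \<inter> (X - A) = {}"
    using sets_into_space by auto
  with modular[of A "X - A"] \<open>A \<in> S\<close> show ?thesis by (simp add: compl_sets)
qed

lemma f_empty_ne_space: "f {} \<noteq> f X"
proof
  assume empty_eq_space: "f {} = f X"
  have "f A = f {}" if "A \<in> S" for A
    using f_eq_of_double_eq_add[of "{}" A "X - A"] f_add_f_compl[OF that] empty_eq_space that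
    by (auto simp: compl_sets)
  then have "z1 = z2"
    using image_eq by (metis imageE insertI1 insert_commute)
  with values_distinct show False ..
qed

lemma f_values_empty_space: "A \<in> S \<Longrightarrow> f A = f {} \<or> f A = f X"
  using f_in_values[of A] f_in_values[of "{}"] f_in_values[of X] f_empty_ne_space by auto

lemma f_compl_eq_empty_iff: "A \<in> S \<Longrightarrow> f (X - A) = f {} \<longleftrightarrow> f A = f X"
  using f_add_f_compl[of A] by (auto simp: add.commute)

lemma f_ne_f_compl: "A \<in> S \<Longrightarrow> f A \<noteq> f (X - A)"
  using f_values_empty_space[of A] f_compl_eq_empty_iff[of A] f_empty_ne_space by auto

lemma f_compl_values: "A \<in> S \<Longrightarrow> {f A, f (X - A)} = {z1, z2}"
  using f_ne_f_compl[of A] f_in_values[of A] f_in_values[of "X - A"] by (auto simp: compl_sets)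

lemma f_eq_empty_if_subset:
  assumes "Y \<in> S" "f Y = f {}" "A \<in> S" "A \<subseteq> Y"
  shows "f A = f {}"
proof (rule ccontr)
  assume "f A \<noteq> f {}"
  then have "f (X - A) = f {}"
    using f_values_empty_space f_compl_eq_empty_iff assms(3) by blast
  then have "f (Y \<union> (X - A)) = f {}"
    using level_set_Un_Int[of Y "X - A"] assms(1-3) by (simp add: compl_sets)
  moreover have "Y \<union> (X - A) = X"
    using sets_into_space[OF assms(1)] assms(4) by blast
  ultimately show False
    using f_empty_ne_space by simp
qed

lemma f_eq_space_if_superset:
  assumes "U \<in> S" "f U = f X" "V \<in> S" "U \<subseteq> V"
  shows "f V = f X"
proof (rule ccontr)
  assume "f V \<noteq> f X"
  then have "f (X - V) = f X"
    using f_values_empty_space[of V] f_compl_eq_empty_iff[of "X - V"] sets_into_space assms(3)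
    by (auto simp: compl_sets double_diff)
  then have "f (U \<inter> (X - V)) = f X"
    using level_set_Un_Int[of U "X - V"] assms(1-3) by (simp add: compl_sets)
  moreover have "U \<inter> (X - V) = {}"
    using assms(4) by blast
  ultimately show False
    using f_empty_ne_space by simp
qed

lemma level_set_finite_Union_Inter:
  assumes "finite F" "F \<noteq> {}" "F \<subseteq> {A \<in> S. f A = u}"
  shows "\<Union>F \<in> {A \<in> S. f A = u} \<and> \<Inter>F \<in> {A \<in> S. f A = u}"
  using assms
proof (induction F rule: finite_ne_induct)
  case (insert A F)
  then show ?case
    using level_set_Un_Int[of A "\<Union>F" u] level_set_Un_Int[of A "\<Inter>F" u] by auto
qed auto

end

theorem lemma3:
  fixes X :: "'a set" and S :: "'a set set" and f :: "'a set \<Rightarrow> complex"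
    and z1 z2 :: complex
  assumes "X \<noteq> {}"
    and "algebra X S"
    and "z1 \<noteq> z2"
    and "f ` S = {z1, z2}"
    and "\<forall>A\<in>S. \<forall>B\<in>S. f A + f B = f (A \<union> B) + f (A \<inter> B)"
  shows "((\<forall>A\<in>S. {f A, f (X - A)} = {z1, z2}) \<and> f {} \<noteq> f X)
    \<and> ((\<forall>Y\<in>S. \<forall>A\<in>S. f Y = f {} \<and> A \<subseteq> Y \<longrightarrow> f A = f {})
       \<and> (\<forall>U\<in>S. \<forall>V\<in>S. f U = f X \<and> U \<subseteq> V \<longrightarrow> f V = f X))
    \<and> (\<forall>z\<in>{z1, z2}. \<forall>F. finite F \<and> F \<noteq> {} \<and> F \<subseteq> {A\<in>S. f A = z} \<longrightarrow>
           \<Inter>F \<in> {A\<in>S. f A = z} \<and> \<Union>F \<in> {A\<in>S. f A = z})"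
proof -
  interpret two_valued_modular X S f z1 z2
    using assms(2-5) by (simp add: two_valued_modular_def two_valued_modular_axioms_def)
  have "\<forall>A\<in>S. {f A, f (X - A)} = {z1, z2}"
    using f_compl_values by blast
  moreover have "\<forall>Y\<in>S. \<forall>A\<in>S. f Y = f {} \<and> A \<subseteq> Y \<longrightarrow> f A = f {}"
    using f_eq_empty_if_subset by blast
  moreover have "\<forall>U\<in>S. \<forall>V\<in>S. f U = f X \<and> U \<subseteq> V \<longrightarrow> f V = f X"
    using f_eq_space_if_superset by blast
  moreover have "\<forall>z\<in>{z1, z2}. \<forall>F. finite F \<and> F \<noteq> {} \<and> F \<subseteq> {A\<in>S. f A = z} \<longrightarrow>
      \<Inter>F \<in> {A\<in>S. f A = z} \<and> \<Union>F \<in> {A\<in>S. f A = z}"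
    using level_set_finite_Union_Inter by blast
  ultimately show ?thesis
    using f_empty_ne_space by blast
qed

end
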